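(* Let $\Delta_1$ and $\Delta_2$ be simplicial complexes on disjoint vertex sets. Then $\Delta_1$ and $\Delta_2$ are both $k$-shellable if and only if the join $\Delta_1\cdot\Delta_2$ is $k$-shellable.
   Context: The join is $\Delta_1\cdot\Delta_2=\{\sigma\cup\tau:\sigma\in\Delta_1,\tau\in\Delta_2\}$. $\langle F_1,\ldots,F_s\rangle$ denotes the simplicial complex with facets $F_1,\dots,F_s$. A simplicial complex $\Gamma$ of dimension $d$ is $k$-shellable ($1\le k\le d+1$) if its facets can be ordered $F_1,\ldots,F_r$ such that for every $j=2,\ldots,r$, $\Gamma_j=\langle F_j\rangle\cap\langle F_1,\ldots,F_{j-1}\rangle$ satisfies (i) $\Gamma_j$ is generated by a nonempty set of faces of $\langle F_j\rangle$ of dimension $|F_j|-k-1$; (ii) if $\Gamma_j$ has more than one facet, then for every two distinct facets $\sigma,\tau$ of $\Gamma_j$, $F_j\subseteq\sigma\cup\tau$. *)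

theory Defs
  imports Main
begin

definition simplicial_complex :: "'a set set \<Rightarrow> bool" where
  "simplicial_complex \<Delta> \<longleftrightarrow> finite \<Delta> \<and> \<Delta> \<noteq> {} \<and> (\<forall>F\<in>\<Delta>. finite F)
     \<and> (\<forall>F\<in>\<Delta>. \<forall>G. G \<subseteq> F \<longrightarrow> G \<in> \<Delta>)"

text \<open>Dimension: max size of a face minus one (as an integer, so that dim of the void-free
complex consisting only of the empty face is -1).\<close>
definition sc_dim :: "'a set set \<Rightarrow> int" where
  "sc_dim \<Delta> = int (Max (card ` \<Delta>)) - 1"

definition facets :: "'a set set \<Rightarrow> 'a set set" where
  "facets \<Delta> = {F \<in> \<Delta>. \<forall>G\<in>\<Delta>. F \<subseteq> G \<longrightarrow> G = F}"

definition gen :: "'a set set \<Rightarrow> 'a set set" where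
  "gen S = {\<tau>. \<exists>\<sigma>\<in>S. \<tau> \<subseteq> \<sigma>}"

definition join :: "'a set set \<Rightarrow> 'a set set \<Rightarrow> 'a set set" where
  "join \<Delta>1 \<Delta>2 = {\<sigma> \<union> \<tau> | \<sigma> \<tau>. \<sigma> \<in> \<Delta>1 \<and> \<tau> \<in> \<Delta>2}"

definition shelling_step :: "nat \<Rightarrow> 'a set \<Rightarrow> 'a set set \<Rightarrow> bool" where
  "shelling_step k Fj \<Gamma> \<longleftrightarrow>
     (\<exists>S. S \<noteq> {} \<and> (\<forall>\<sigma>\<in>S. \<sigma> \<subseteq> Fj \<and> int (card \<sigma>) = int (card Fj) - int k) \<and> \<Gamma> = gen S)
   \<and> (card (facets \<Gamma>) > 1 \<longrightarrow>
        (\<forall>\<sigma>\<in>facets \<Gamma>. \<forall>\<tau>\<in>facets \<Gamma>. \<sigma> \<noteq> \<tau> \<longrightarrow> Fj \<subseteq> \<sigma> \<union> \<tau>))"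

definition k_shellable :: "nat \<Rightarrow> 'a set set \<Rightarrow> bool" where
  "k_shellable k \<Delta> \<longleftrightarrow> 1 \<le> k \<and> int k \<le> sc_dim \<Delta> + 1 \<and>
     (\<exists>Fs. distinct Fs \<and> set Fs = facets \<Delta> \<and>
        (\<forall>j. 1 \<le> j \<and> j < length Fs \<longrightarrow>
           shelling_step k (Fs ! j) (gen {Fs ! j} \<inter> gen (set (take j Fs)))))"

end

(*
  Write \<Gamma>_F for the intersection of the simplex on a facet F with the complex generated by
  the facets preceding F.  Given shellings of \<Delta>1 and \<Delta>2, order the facets F \<union> G of the join
  lexicographically, by G first.  Then \<Gamma>_(F \<union> G) is the union of the joins of the simplex on F
  with \<Gamma>_G and of \<Gamma>_F with the simplex on G; its facets F \<union> \<tau> and \<sigma> \<union> G again have codimension k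
  and cover F \<union> G pairwise.  Conversely, fix a facet G of \<Delta>2: the facets F \<union> G, in the order
  inherited from a shelling of the join, yield a shelling of \<Delta>1, because \<Gamma>_F is the link of G
  in \<Gamma>_(F \<union> G).
*)

theory Submission
  imports Defs
begin

section \<open>Generated complexes, facets and joins\<close>

lemma gen_iff [simp]: "\<tau> \<in> gen S \<longleftrightarrow> (\<exists>\<sigma>\<in>S. \<tau> \<subseteq> \<sigma>)"
  by (simp add: gen_def)

lemma gen_empty [simp]: "gen {} = {}"
  by (simp add: gen_def)

lemma gen_Un: "gen (A \<union> B) = gen A \<union> gen B"
  unfolding gen_def by blast

lemma gen_Pow: "S \<subseteq> Pow V \<Longrightarrow> gen S \<subseteq> Pow V"
  unfolding gen_def by blast

lemma gen_simplicial_complex: "simplicial_complex \<Delta> \<Longrightarrow> gen \<Delta> = \<Delta>"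
  by (auto simp: simplicial_complex_def)

lemma empty_face: "simplicial_complex \<Delta> \<Longrightarrow> {} \<in> \<Delta>"
  unfolding simplicial_complex_def by blast

lemma facets_iff: "F \<in> facets \<Delta> \<longleftrightarrow> F \<in> \<Delta> \<and> (\<forall>G\<in>\<Delta>. F \<subseteq> G \<longrightarrow> G = F)"
  by (simp add: facets_def)

lemma facets_subset: "facets \<Delta> \<subseteq> \<Delta>"
  by (auto simp: facets_iff)

lemma facet_maximal: "F \<in> facets \<Delta> \<Longrightarrow> G \<in> \<Delta> \<Longrightarrow> F \<subseteq> G \<Longrightarrow> G = F"
  by (simp add: facets_iff)

lemma facets_gen_antichain:
  assumes "\<forall>\<sigma>\<in>S. \<forall>\<tau>\<in>S. \<sigma> \<subseteq> \<tau> \<longrightarrow> \<sigma> = \<tau>"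
  shows "facets (gen S) = S"
proof (intro antisym subsetI)
  fix \<sigma> assume facet: "\<sigma> \<in> facets (gen S)"
  then obtain \<tau> where "\<tau> \<in> S" "\<sigma> \<subseteq> \<tau>"
    by (auto simp: facets_iff)
  with facet show "\<sigma> \<in> S"
    unfolding facets_iff by (metis gen_iff subset_refl)
next
  fix \<sigma> assume "\<sigma> \<in> S"
  with assms show "\<sigma> \<in> facets (gen S)"
    unfolding facets_iff by (metis gen_iff subset_antisym subset_trans subset_refl)
qed

lemma join_iff: "x \<in> join A B \<longleftrightarrow> (\<exists>\<sigma>\<in>A. \<exists>\<tau>\<in>B. x = \<sigma> \<union> \<tau>)"
  by (auto simp: join_def)

lemma join_memI [intro]: "\<sigma> \<in> A \<Longrightarrow> \<tau> \<in> B \<Longrightarrow> \<sigma> \<union> \<tau> \<in> join A B"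
  by (auto simp: join_iff)

lemma join_memE [elim]:
  assumes "x \<in> join A B"
  obtains \<sigma> \<tau> where "\<sigma> \<in> A" "\<tau> \<in> B" "x = \<sigma> \<union> \<tau>"
  using assms by (auto simp: join_iff)

lemma join_commute: "join A B = join B A"
proof -
  have "join A B \<subseteq> join B A" for A B :: "'a set set"
  proof
    fix x assume "x \<in> join A B"
    then obtain \<sigma> \<tau> where "\<sigma> \<in> A" "\<tau> \<in> B" "x = \<tau> \<union> \<sigma>"
      by (metis join_memE Un_commute)
    then show "x \<in> join B A"
      by blast
  qed
  then show ?thesis
    by (simp add: antisym)
qed

lemma gen_join: "gen (join A B) = join (gen A) (gen B)"
proof (intro antisym subsetI)
  fix x assume "x \<in> gen (join A B)"
  then obtain \<rho> where "\<rho> \<in> join A B" "x \<subseteq> \<rho>"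
    by auto
  then obtain \<sigma> \<tau> where "\<sigma> \<in> A" "\<tau> \<in> B" "x \<subseteq> \<sigma> \<union> \<tau>"
    by (metis join_memE)
  then have "(x \<inter> \<sigma>) \<union> (x \<inter> \<tau>) \<in> join (gen A) (gen B)"
    by (intro join_memI) auto
  moreover have "(x \<inter> \<sigma>) \<union> (x \<inter> \<tau>) = x"
    using \<open>x \<subseteq> \<sigma> \<union> \<tau>\<close> by (simp add: Int_Un_distrib[symmetric] Int_absorb2)
  ultimately show "x \<in> join (gen A) (gen B)"
    by simp
next
  fix x assume "x \<in> join (gen A) (gen B)"
  then obtain \<sigma> \<tau> where "\<sigma> \<in> gen A" "\<tau> \<in> gen B" "x = \<sigma> \<union> \<tau>"
    by (rule join_memE)
  then obtain \<sigma>' \<tau>' where "\<sigma>' \<in> A" "\<tau>' \<in> B" "x \<subseteq> \<sigma>' \<union> \<tau>'"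
    by auto
  then show "x \<in> gen (join A B)"
    unfolding gen_iff by (meson join_memI)
qed

lemma join_Int_join:
  assumes "K1 \<union> L1 \<subseteq> Pow V1" "K2 \<union> L2 \<subseteq> Pow V2" "V1 \<inter> V2 = {}"
  shows "join K1 K2 \<inter> join L1 L2 = join (K1 \<inter> L1) (K2 \<inter> L2)"
proof (intro antisym subsetI)
  fix x assume x: "x \<in> join K1 K2 \<inter> join L1 L2"
  obtain \<sigma> \<tau> where in_K: "\<sigma> \<in> K1" "\<tau> \<in> K2" and "x = \<sigma> \<union> \<tau>"
    using x by (metis IntD1 join_memE)
  obtain \<sigma>' \<tau>' where in_L: "\<sigma>' \<in> L1" "\<tau>' \<in> L2" and "x = \<sigma>' \<union> \<tau>'"
    using x by (metis IntD2 join_memE)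
  have "\<sigma> \<subseteq> V1" "\<tau> \<subseteq> V2" "\<sigma>' \<subseteq> V1" "\<tau>' \<subseteq> V2"
    using in_K in_L assms(1,2) by auto
  then have "\<sigma> = x \<inter> V1" "\<sigma>' = x \<inter> V1" "\<tau> = x \<inter> V2" "\<tau>' = x \<inter> V2"
    using assms(3) \<open>x = \<sigma> \<union> \<tau>\<close> \<open>x = \<sigma>' \<union> \<tau>'\<close> by blast+
  with in_K in_L \<open>x = \<sigma> \<union> \<tau>\<close> show "x \<in> join (K1 \<inter> L1) (K2 \<inter> L2)"
    by (metis IntI join_memI)
qed (auto elim!: join_memE)

lemma finite_join: "finite A \<Longrightarrow> finite B \<Longrightarrow> finite (join A B)"
proof -
  have "join A B = (\<lambda>(\<sigma>, \<tau>). \<sigma> \<union> \<tau>) ` (A \<times> B)"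
    by (auto simp: join_def)
  then show "finite A \<Longrightarrow> finite B \<Longrightarrow> finite (join A B)"
    by simp
qed

lemma simplicial_complex_join:
  assumes "simplicial_complex \<Delta>1" "simplicial_complex \<Delta>2"
  shows "simplicial_complex (join \<Delta>1 \<Delta>2)"
  unfolding simplicial_complex_def
proof (intro conjI ballI allI impI)
  show "finite (join \<Delta>1 \<Delta>2)"
    using assms by (simp add: simplicial_complex_def finite_join)
  show "join \<Delta>1 \<Delta>2 \<noteq> {}"
    using join_memI[OF empty_face empty_face, OF assms] by blast
  show "finite F" if "F \<in> join \<Delta>1 \<Delta>2" for F
    using that assms by (auto simp: simplicial_complex_def elim!: join_memE)
  show "G \<in> join \<Delta>1 \<Delta>2" if "F \<in> join \<Delta>1 \<Delta>2" "G \<subseteq> F" for F G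
    using that gen_join[of \<Delta>1 \<Delta>2] by (simp add: gen_simplicial_complex assms) (metis gen_iff)
qed

lemma sc_dim_le_join:
  assumes "simplicial_complex \<Delta>1" "simplicial_complex \<Delta>2"
  shows "sc_dim \<Delta>1 \<le> sc_dim (join \<Delta>1 \<Delta>2)"
proof -
  have "\<Delta>1 \<subseteq> join \<Delta>1 \<Delta>2"
    using join_memI[OF _ empty_face[OF assms(2)]] by fastforce
  moreover have "finite (join \<Delta>1 \<Delta>2)" "\<Delta>1 \<noteq> {}"
    using assms unfolding simplicial_complex_def by (simp_all add: finite_join)
  ultimately have "Max (card ` \<Delta>1) \<le> Max (card ` join \<Delta>1 \<Delta>2)"
    by (intro Max_mono image_mono) simp_all
  then show ?thesis
    unfolding sc_dim_def by simp
qed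

section \<open>Shelling steps and shelling orders\<close>

text \<open>Conditions (i) and (ii) of a shelling step for \<open>\<Gamma> = gen S\<close>, phrased in terms of \<open>S\<close>,
  which is then exactly the set of facets of \<open>\<Gamma>\<close>.\<close>

definition shelling_facets :: "nat \<Rightarrow> 'a set \<Rightarrow> 'a set set \<Rightarrow> bool" where
  "shelling_facets k F S \<longleftrightarrow>
     (\<forall>\<sigma>\<in>S. \<sigma> \<subseteq> F \<and> card \<sigma> + k = card F) \<and> pairwise (\<lambda>\<sigma> \<tau>. F \<subseteq> \<sigma> \<union> \<tau>) S"

lemma facets_gen_uniform:
  assumes "finite F" "\<forall>\<sigma>\<in>S. \<sigma> \<subseteq> F \<and> card \<sigma> + k = card F"
  shows "facets (gen S) = S"
proof (rule facets_gen_antichain, intro ballI impI)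
  fix \<sigma> \<tau> assume "\<sigma> \<in> S" "\<tau> \<in> S" "\<sigma> \<subseteq> \<tau>"
  with assms have "\<tau> \<subseteq> F" "card \<sigma> + k = card F" "card \<tau> + k = card F"
    by auto
  with assms(1) have "finite \<tau>" "card \<sigma> = card \<tau>"
    by (auto intro: finite_subset)
  with \<open>\<sigma> \<subseteq> \<tau>\<close> show "\<sigma> = \<tau>"
    by (simp add: card_subset_eq)
qed

lemma pairwise_iff_card_gt_1:
  assumes "finite S"
  shows "pairwise P S \<longleftrightarrow> (1 < card S \<longrightarrow> (\<forall>\<sigma>\<in>S. \<forall>\<tau>\<in>S. \<sigma> \<noteq> \<tau> \<longrightarrow> P \<sigma> \<tau>))"
  using card_le_Suc0_iff_eq[OF assms] unfolding pairwise_def by (auto simp: not_less)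

lemma pairwise_cover_iff_facets:
  assumes "finite F" and uniform: "\<forall>\<sigma>\<in>S. \<sigma> \<subseteq> F \<and> card \<sigma> + k = card F"
  shows "pairwise (\<lambda>\<sigma> \<tau>. F \<subseteq> \<sigma> \<union> \<tau>) S
    \<longleftrightarrow> (1 < card (facets (gen S)) \<longrightarrow>
      (\<forall>\<sigma>\<in>facets (gen S). \<forall>\<tau>\<in>facets (gen S). \<sigma> \<noteq> \<tau> \<longrightarrow> F \<subseteq> \<sigma> \<union> \<tau>))"
proof -
  have "S \<subseteq> Pow F"
    using uniform by blast
  then have "finite S"
    using assms(1) by (simp add: finite_subset)
  then show ?thesis
    by (simp add: pairwise_iff_card_gt_1 facets_gen_uniform[OF assms(1) uniform])
qed

lemma shelling_step_iff:
  assumes "finite F" "\<Gamma> \<noteq> {}"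
  shows "shelling_step k F \<Gamma> \<longleftrightarrow> (\<exists>S. shelling_facets k F S \<and> \<Gamma> = gen S)"
proof -
  have card_iff: "\<sigma> \<subseteq> F \<and> int (card \<sigma>) = int (card F) - int k \<longleftrightarrow> \<sigma> \<subseteq> F \<and> card \<sigma> + k = card F"
    for \<sigma> :: "'a set"
    by linarith
  note pairwise_iff = pairwise_cover_iff_facets[OF assms(1)]
  show ?thesis
  proof
    assume "shelling_step k F \<Gamma>"
    then obtain S where uniform: "\<forall>\<sigma>\<in>S. \<sigma> \<subseteq> F \<and> card \<sigma> + k = card F" and "\<Gamma> = gen S"
      and "1 < card (facets \<Gamma>) \<longrightarrow> (\<forall>\<sigma>\<in>facets \<Gamma>. \<forall>\<tau>\<in>facets \<Gamma>. \<sigma> \<noteq> \<tau> \<longrightarrow> F \<subseteq> \<sigma> \<union> \<tau>)"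
      unfolding shelling_step_def card_iff by blast
    then have "shelling_facets k F S"
      unfolding shelling_facets_def using pairwise_iff[OF uniform] by simp
    with \<open>\<Gamma> = gen S\<close> show "\<exists>S. shelling_facets k F S \<and> \<Gamma> = gen S"
      by blast
  next
    assume "\<exists>S. shelling_facets k F S \<and> \<Gamma> = gen S"
    then obtain S where uniform: "\<forall>\<sigma>\<in>S. \<sigma> \<subseteq> F \<and> card \<sigma> + k = card F"
      and "pairwise (\<lambda>\<sigma> \<tau>. F \<subseteq> \<sigma> \<union> \<tau>) S" and "\<Gamma> = gen S"
      unfolding shelling_facets_def by blast
    have "S \<noteq> {}"
      using assms(2) \<open>\<Gamma> = gen S\<close> by auto
    with uniform \<open>\<Gamma> = gen S\<close>
    have "\<exists>S. S \<noteq> {} \<and> (\<forall>\<sigma>\<in>S. \<sigma> \<subseteq> F \<and> card \<sigma> + k = card F) \<and> \<Gamma> = gen S"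
      by blast
    moreover have "1 < card (facets \<Gamma>) \<longrightarrow> (\<forall>\<sigma>\<in>facets \<Gamma>. \<forall>\<tau>\<in>facets \<Gamma>. \<sigma> \<noteq> \<tau> \<longrightarrow> F \<subseteq> \<sigma> \<union> \<tau>)"
      using pairwise_iff[OF uniform] \<open>pairwise _ S\<close> \<open>\<Gamma> = gen S\<close> by simp
    ultimately show "shelling_step k F \<Gamma>"
      unfolding shelling_step_def card_iff by (rule conjI)
  qed
qed

lemma sorted_wrt_rank_lower_set:
  fixes f :: "'b \<Rightarrow> 'c::linorder"
  assumes sorted: "sorted_wrt (\<lambda>x y. f x < f y) Fs" and "j < length Fs"
  shows "{G \<in> set Fs. f G < f (Fs ! j)} = set (take j Fs)"
proof -
  have less_iff: "f (Fs ! i) < f (Fs ! j) \<longleftrightarrow> i < j" if "i < length Fs" for i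
  proof (cases i j rule: linorder_cases)
    case greater
    then have "f (Fs ! j) < f (Fs ! i)"
      using sorted_wrt_nth_less[OF sorted] that by blast
    with greater show ?thesis
      by auto
  qed (use sorted_wrt_nth_less[OF sorted] \<open>j < length Fs\<close> in auto)
  have "set Fs = (!) Fs ` {0..<length Fs}" "set (take j Fs) = (!) Fs ` {0..<j}"
    using nth_image[of "length Fs" Fs] nth_image[of j Fs] \<open>j < length Fs\<close> by simp_all
  then show ?thesis
    using less_iff \<open>j < length Fs\<close> by auto
qed

lemma sorted_wrt_rank_inj_on:
  fixes f :: "'b \<Rightarrow> 'c::linorder"
  assumes "sorted_wrt (\<lambda>x y. f x < f y) Fs"
  shows "inj_on f (set Fs)"
proof -
  have "sorted_wrt (<) (map f Fs)"
    using assms by (simp add: sorted_wrt_map)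
  then show ?thesis
    using distinct_map strict_sorted_iff by blast
qed

lemma ex_distinct_list_iff_ex_rank:
  assumes "finite A"
  shows "(\<exists>Fs. distinct Fs \<and> set Fs = A \<and> (\<forall>j<length Fs. P (Fs ! j) (set (take j Fs))))
     \<longleftrightarrow> (\<exists>f :: 'b \<Rightarrow> nat. inj_on f A \<and> (\<forall>F\<in>A. P F {G \<in> A. f G < f F}))"
proof
  assume "\<exists>Fs. distinct Fs \<and> set Fs = A \<and> (\<forall>j<length Fs. P (Fs ! j) (set (take j Fs)))"
  then obtain Fs where "distinct Fs" "set Fs = A" and P: "\<forall>j<length Fs. P (Fs ! j) (set (take j Fs))"
    by blast
  define f where "f x = (THE i. i < length Fs \<and> Fs ! i = x)" for x
  have f_nth: "f (Fs ! i) = i" if "i < length Fs" for i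
    unfolding f_def
  proof (rule the_equality)
    show "\<And>i'. i' < length Fs \<and> Fs ! i' = Fs ! i \<Longrightarrow> i' = i"
      using that \<open>distinct Fs\<close> nth_eq_iff_index_eq by blast
  qed (use that in simp)
  then have sorted: "sorted_wrt (\<lambda>x y. f x < f y) Fs"
    by (simp add: sorted_wrt_iff_nth_less)
  have "P F {G \<in> A. f G < f F}" if "F \<in> A" for F
  proof -
    have "F \<in> set Fs"
      using that \<open>set Fs = A\<close> by simp
    then obtain j where "j < length Fs" "Fs ! j = F"
      by (auto simp: in_set_conv_nth)
    then show ?thesis
      using P sorted_wrt_rank_lower_set[OF sorted] \<open>set Fs = A\<close> by force
  qed
  moreover have "inj_on f A"
    using sorted_wrt_rank_inj_on[OF sorted] \<open>set Fs = A\<close> by simp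
  ultimately show "\<exists>f :: 'b \<Rightarrow> nat. inj_on f A \<and> (\<forall>F\<in>A. P F {G \<in> A. f G < f F})"
    by blast
next
  assume "\<exists>f :: 'b \<Rightarrow> nat. inj_on f A \<and> (\<forall>F\<in>A. P F {G \<in> A. f G < f F})"
  then obtain f :: "'b \<Rightarrow> nat" where "inj_on f A" and P: "\<forall>F\<in>A. P F {G \<in> A. f G < f F}"
    by blast
  obtain xs where "distinct xs" "set xs = A"
    using finite_distinct_list[OF assms] by blast
  define Fs where "Fs = sort_key f xs"
  have "distinct Fs" "set Fs = A"
    using \<open>distinct xs\<close> \<open>set xs = A\<close> by (simp_all add: Fs_def)
  have "sorted_wrt (<) (map f Fs)"
    unfolding strict_sorted_iff using \<open>inj_on f A\<close> \<open>distinct Fs\<close> \<open>set Fs = A\<close>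
    by (simp add: Fs_def distinct_map)
  then have sorted: "sorted_wrt (\<lambda>x y. f x < f y) Fs"
    by (simp add: sorted_wrt_map)
  have "P (Fs ! j) (set (take j Fs))" if "j < length Fs" for j
  proof -
    have "Fs ! j \<in> A"
      using that \<open>set Fs = A\<close> by auto
    with P have "P (Fs ! j) {G \<in> A. f G < f (Fs ! j)}"
      by blast
    then show ?thesis
      using sorted_wrt_rank_lower_set[OF sorted that] \<open>set Fs = A\<close> by simp
  qed
  with \<open>distinct Fs\<close> \<open>set Fs = A\<close>
  show "\<exists>Fs. distinct Fs \<and> set Fs = A \<and> (\<forall>j<length Fs. P (Fs ! j) (set (take j Fs)))"
    by blast
qed

text \<open>A shelling order encoded by an injective rank on the facets.  The first facet needs no
  exception: there \<open>\<Gamma> = {} = gen {}\<close>.\<close>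

definition shelling_rank :: "nat \<Rightarrow> 'a set set \<Rightarrow> ('a set \<Rightarrow> nat) \<Rightarrow> bool" where
  "shelling_rank k \<Delta> f \<longleftrightarrow> inj_on f (facets \<Delta>) \<and>
     (\<forall>F\<in>facets \<Delta>. \<exists>S. shelling_facets k F S \<and> gen {F} \<inter> gen {G \<in> facets \<Delta>. f G < f F} = gen S)"

lemma shelling_step_gen_iff:
  assumes "finite F"
  shows "(T \<noteq> {} \<longrightarrow> shelling_step k F (gen {F} \<inter> gen T))
    \<longleftrightarrow> (\<exists>S. shelling_facets k F S \<and> gen {F} \<inter> gen T = gen S)"
proof (cases "T = {}")
  case True
  have "shelling_facets k F {}" "gen {F} \<inter> gen T = gen {}"
    using True by (simp_all add: shelling_facets_def)
  with True show ?thesis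
    by blast
next
  case False
  then have "{} \<in> gen {F} \<inter> gen T"
    by auto
  then have "gen {F} \<inter> gen T \<noteq> {}"
    by blast
  with False show ?thesis
    using shelling_step_iff[OF assms, of "gen {F} \<inter> gen T" k] by simp
qed

lemma k_shellable_iff_rank:
  assumes "simplicial_complex \<Delta>"
  shows "k_shellable k \<Delta> \<longleftrightarrow> 1 \<le> k \<and> int k \<le> sc_dim \<Delta> + 1 \<and> (\<exists>f. shelling_rank k \<Delta> f)"
proof -
  let ?attach = "\<lambda>F T. \<exists>S. shelling_facets k F S \<and> gen {F} \<inter> gen T = gen S"
  have "finite (facets \<Delta>)" "\<forall>F\<in>facets \<Delta>. finite F"
    using assms unfolding simplicial_complex_def facets_def by auto
  have steps_iff: "(\<forall>j. 1 \<le> j \<and> j < length Fs \<longrightarrow>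
         shelling_step k (Fs ! j) (gen {Fs ! j} \<inter> gen (set (take j Fs))))
      \<longleftrightarrow> (\<forall>j<length Fs. ?attach (Fs ! j) (set (take j Fs)))" if "set Fs = facets \<Delta>" for Fs
  proof -
    have "(1 \<le> j \<longrightarrow> shelling_step k (Fs ! j) (gen {Fs ! j} \<inter> gen (set (take j Fs))))
        \<longleftrightarrow> ?attach (Fs ! j) (set (take j Fs))" if "j < length Fs" for j
    proof -
      have "finite (Fs ! j)"
        using that \<open>set Fs = facets \<Delta>\<close> \<open>\<forall>F\<in>facets \<Delta>. finite F\<close> nth_mem by blast
      moreover have "set (take j Fs) \<noteq> {} \<longleftrightarrow> 1 \<le> j"
        using that by auto
      ultimately show ?thesis
        using shelling_step_gen_iff[of "Fs ! j" "set (take j Fs)" k] by simp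
    qed
    then show ?thesis
      by auto
  qed
  have "k_shellable k \<Delta> \<longleftrightarrow> 1 \<le> k \<and> int k \<le> sc_dim \<Delta> + 1 \<and>
      (\<exists>Fs. distinct Fs \<and> set Fs = facets \<Delta> \<and> (\<forall>j<length Fs. ?attach (Fs ! j) (set (take j Fs))))"
    unfolding k_shellable_def using steps_iff by (simp cong: conj_cong)
  also have "\<dots> \<longleftrightarrow> 1 \<le> k \<and> int k \<le> sc_dim \<Delta> + 1 \<and> (\<exists>f. shelling_rank k \<Delta> f)"
    using ex_distinct_list_iff_ex_rank[OF \<open>finite (facets \<Delta>)\<close>, of ?attach]
    by (simp add: shelling_rank_def)
  finally show ?thesis .
qed

section \<open>Shelling steps in joins\<close>

lemma join_singleton_left: "join {F} S = (\<lambda>\<tau>. F \<union> \<tau>) ` S"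
  by (auto simp: join_iff)

lemma join_singleton_right: "join S {G} = (\<lambda>\<sigma>. \<sigma> \<union> G) ` S"
  by (auto simp: join_iff)

lemma card_Un_disjoint_add:
  assumes "finite F" "finite G" "F \<inter> G = {}" "\<tau> \<subseteq> G" "card \<tau> + k = card G"
  shows "card (F \<union> \<tau>) + k = card (F \<union> G)"
proof -
  have "finite \<tau>" "F \<inter> \<tau> = {}"
    using assms finite_subset by blast+
  with assms show ?thesis
    by (simp add: card_Un_disjoint)
qed

lemma shelling_facets_join:
  assumes "finite F" "finite G" "F \<inter> G = {}"
    and S1: "shelling_facets k F S1" and S2: "shelling_facets k G S2"
  shows "shelling_facets k (F \<union> G) (join {F} S2 \<union> join S1 {G})"
proof -
  have "\<rho> \<subseteq> F \<union> G \<and> card \<rho> + k = card (F \<union> G)" if "\<rho> \<in> join {F} S2 \<union> join S1 {G}" for \<rho>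
  proof (cases "\<rho> \<in> join {F} S2")
    case True
    then obtain \<tau> where "\<tau> \<in> S2" "\<rho> = F \<union> \<tau>"
      by (auto simp: join_singleton_left)
    with S2 show ?thesis
      using card_Un_disjoint_add[OF assms(1-3)] by (auto simp: shelling_facets_def)
  next
    case False
    with that obtain \<sigma> where "\<sigma> \<in> S1" "\<rho> = \<sigma> \<union> G"
      by (auto simp: join_singleton_right)
    moreover from this S1 have "\<sigma> \<subseteq> F" "card \<sigma> + k = card F"
      by (auto simp: shelling_facets_def)
    moreover from this have "card (G \<union> \<sigma>) + k = card (G \<union> F)"
      using card_Un_disjoint_add[of G F \<sigma> k] assms(1-3) by (simp add: Int_commute)
    ultimately show ?thesis
      by (metis Un_commute Un_mono subset_refl)
  qed
  moreover have "F \<union> G \<subseteq> \<rho> \<union> \<rho>'"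
    if "\<rho> \<in> join {F} S2 \<union> join S1 {G}" "\<rho>' \<in> join {F} S2 \<union> join S1 {G}" "\<rho> \<noteq> \<rho>'" for \<rho> \<rho>'
  proof -
    have cover1: "F \<subseteq> \<sigma> \<union> \<sigma>'" if "\<sigma> \<in> S1" "\<sigma>' \<in> S1" "\<sigma> \<noteq> \<sigma>'" for \<sigma> \<sigma>'
      using S1 that unfolding shelling_facets_def pairwise_def by blast
    have cover2: "G \<subseteq> \<tau> \<union> \<tau>'" if "\<tau> \<in> S2" "\<tau>' \<in> S2" "\<tau> \<noteq> \<tau>'" for \<tau> \<tau>'
      using S2 that unfolding shelling_facets_def pairwise_def by blast
    from that show ?thesis
      unfolding join_singleton_left join_singleton_right
      by (elim UnE imageE; use cover1 cover2 in blast)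
  qed
  ultimately show ?thesis
    unfolding shelling_facets_def pairwise_def by blast
qed

lemma gen_link:
  assumes "F \<inter> G = {}" "\<forall>s\<in>S. s \<subseteq> F \<union> G"
  shows "{x. x \<subseteq> F \<and> x \<union> G \<in> gen S} = gen ((\<lambda>s. s - G) ` {s \<in> S. G \<subseteq> s})"
proof (intro set_eqI iffI)
  fix x assume "x \<in> {x. x \<subseteq> F \<and> x \<union> G \<in> gen S}"
  then obtain s where "s \<in> S" "x \<union> G \<subseteq> s" "x \<subseteq> F"
    by auto
  moreover have "x \<subseteq> s - G"
    using calculation assms(1) by blast
  ultimately show "x \<in> gen ((\<lambda>s. s - G) ` {s \<in> S. G \<subseteq> s})"
    by auto
next
  fix x assume "x \<in> gen ((\<lambda>s. s - G) ` {s \<in> S. G \<subseteq> s})"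
  then obtain s where "s \<in> S" "G \<subseteq> s" "x \<subseteq> s - G"
    by auto
  moreover from this assms(2) have "x \<subseteq> F"
    by blast
  ultimately show "x \<in> {x. x \<subseteq> F \<and> x \<union> G \<in> gen S}"
    by auto
qed

lemma shelling_facets_link:
  assumes "finite F" "finite G" "F \<inter> G = {}" and S: "shelling_facets k (F \<union> G) S"
  shows "shelling_facets k F ((\<lambda>s. s - G) ` {s \<in> S. G \<subseteq> s})"
proof -
  have "s - G \<subseteq> F \<and> card (s - G) + k = card F" if "s \<in> S" "G \<subseteq> s" for s
  proof -
    have "s \<subseteq> F \<union> G" "card s + k = card (F \<union> G)"
      using S that(1) by (auto simp: shelling_facets_def)
    moreover have "card (F \<union> G) = card F + card G"
      using assms(1-3) by (rule card_Un_disjoint)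
    moreover have "card (s - G) = card s - card G" "card G \<le> card s"
      using that(2) \<open>finite G\<close> card_Diff_subset card_mono \<open>s \<subseteq> F \<union> G\<close> assms(1)
      by (metis finite_Un finite_subset)+
    ultimately show ?thesis
      by auto
  qed
  moreover have "F \<subseteq> (s - G) \<union> (s' - G)" if "s \<in> S" "s' \<in> S" "s - G \<noteq> s' - G" for s s'
  proof -
    have "F \<union> G \<subseteq> s \<union> s'"
      using S that unfolding shelling_facets_def pairwise_def by blast
    with assms(3) show ?thesis
      by blast
  qed
  ultimately show ?thesis
    unfolding shelling_facets_def pairwise_def by blast
qed

lemma ex_facet_superset:
  assumes "finite \<Delta>" "\<sigma> \<in> \<Delta>"
  shows "\<exists>F\<in>facets \<Delta>. \<sigma> \<subseteq> F"
proof -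
  obtain F where "F \<in> \<Delta>" "\<sigma> \<subseteq> F" "\<forall>G\<in>\<Delta>. F \<subseteq> G \<longrightarrow> F = G"
    using finite_has_maximal2[OF assms] by blast
  then have "F \<in> facets \<Delta>"
    unfolding facets_iff by (metis (full_types))
  with \<open>\<sigma> \<subseteq> F\<close> show ?thesis
    by blast
qed

lemma mult_add_less_mult_add_iff:
  fixes a a' b b' N :: nat
  assumes "a < N" "a' < N"
  shows "b' * N + a' < b * N + a \<longleftrightarrow> b' < b \<or> (b' = b \<and> a' < a)"
proof -
  have "x * N + c < y * N" if "x < y" "c < N" for x y c :: nat
  proof -
    have "Suc x * N \<le> y * N"
      using that(1) by (intro mult_le_mono1) simp
    with that(2) show ?thesis
      by simp
  qed
  from this[of b' b a'] this[of b b' a] assms show ?thesis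
    by (cases b b' rule: linorder_cases) auto
qed

section \<open>Joins of complexes on disjoint vertex sets\<close>

locale disjoint_complexes =
  fixes \<Delta>1 \<Delta>2 :: "'a set set" and V1 V2 :: "'a set"
  assumes complex1: "simplicial_complex \<Delta>1" and complex2: "simplicial_complex \<Delta>2"
    and faces1: "\<Delta>1 \<subseteq> Pow V1" and faces2: "\<Delta>2 \<subseteq> Pow V2" and disjoint: "V1 \<inter> V2 = {}"
begin

lemma facets1: "facets \<Delta>1 \<subseteq> Pow V1" and facets2: "facets \<Delta>2 \<subseteq> Pow V2"
  using faces1 faces2 by (auto simp: facets_iff)

lemma finite_facet1: "F \<in> facets \<Delta>1 \<Longrightarrow> finite F" and finite_facet2: "G \<in> facets \<Delta>2 \<Longrightarrow> finite G"
  using complex1 complex2 by (auto simp: simplicial_complex_def facets_iff)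

lemma facets_disjoint: "F \<in> facets \<Delta>1 \<Longrightarrow> G \<in> facets \<Delta>2 \<Longrightarrow> F \<inter> G = {}"
  using facets1 facets2 disjoint by blast

lemma Un_Int_V1: "\<sigma> \<in> \<Delta>1 \<Longrightarrow> \<tau> \<in> \<Delta>2 \<Longrightarrow> (\<sigma> \<union> \<tau>) \<inter> V1 = \<sigma>"
  and Un_Int_V2: "\<sigma> \<in> \<Delta>1 \<Longrightarrow> \<tau> \<in> \<Delta>2 \<Longrightarrow> (\<sigma> \<union> \<tau>) \<inter> V2 = \<tau>"
  using faces1 faces2 disjoint by blast+

lemma facets_join: "facets (join \<Delta>1 \<Delta>2) = join (facets \<Delta>1) (facets \<Delta>2)"
proof (intro antisym subsetI)
  fix H assume H: "H \<in> facets (join \<Delta>1 \<Delta>2)"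
  then obtain \<sigma> \<tau> where "\<sigma> \<in> \<Delta>1" "\<tau> \<in> \<Delta>2" "H = \<sigma> \<union> \<tau>"
    by (auto simp: facets_iff elim!: join_memE)
  moreover obtain F G where "F \<in> facets \<Delta>1" "\<sigma> \<subseteq> F" "G \<in> facets \<Delta>2" "\<tau> \<subseteq> G"
    using ex_facet_superset complex1 complex2 calculation(1,2)
    unfolding simplicial_complex_def by meson
  moreover have "F \<union> G \<in> join \<Delta>1 \<Delta>2"
    using calculation by (auto simp: facets_iff)
  ultimately have "F \<union> G = H"
    using facet_maximal[OF H] by blast
  with \<open>F \<in> facets \<Delta>1\<close> \<open>G \<in> facets \<Delta>2\<close> show "H \<in> join (facets \<Delta>1) (facets \<Delta>2)"
    by blast
next
  fix H assume "H \<in> join (facets \<Delta>1) (facets \<Delta>2)"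
  then obtain F G where F: "F \<in> facets \<Delta>1" and G: "G \<in> facets \<Delta>2" and "H = F \<union> G"
    by (rule join_memE)
  then have "F \<in> \<Delta>1" "G \<in> \<Delta>2"
    by (auto simp: facets_iff)
  have "K = H" if "K \<in> join \<Delta>1 \<Delta>2" and "H \<subseteq> K" for K
  proof -
    from \<open>K \<in> join \<Delta>1 \<Delta>2\<close> obtain \<sigma> \<tau> where "\<sigma> \<in> \<Delta>1" "\<tau> \<in> \<Delta>2" "K = \<sigma> \<union> \<tau>"
      by (rule join_memE)
    have "H \<inter> V1 \<subseteq> K \<inter> V1" "H \<inter> V2 \<subseteq> K \<inter> V2"
      using \<open>H \<subseteq> K\<close> by blast+
    then have "F \<subseteq> \<sigma>" "G \<subseteq> \<tau>"
      using Un_Int_V1 Un_Int_V2 \<open>F \<in> \<Delta>1\<close> \<open>G \<in> \<Delta>2\<close> \<open>\<sigma> \<in> \<Delta>1\<close> \<open>\<tau> \<in> \<Delta>2\<close>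
      unfolding \<open>H = F \<union> G\<close> \<open>K = \<sigma> \<union> \<tau>\<close> by simp_all
    then have "\<sigma> = F" "\<tau> = G"
      using facet_maximal F G \<open>\<sigma> \<in> \<Delta>1\<close> \<open>\<tau> \<in> \<Delta>2\<close> by blast+
    with \<open>H = F \<union> G\<close> \<open>K = \<sigma> \<union> \<tau>\<close> show "K = H"
      by simp
  qed
  moreover have "H \<in> join \<Delta>1 \<Delta>2"
    using \<open>F \<in> \<Delta>1\<close> \<open>G \<in> \<Delta>2\<close> \<open>H = F \<union> G\<close> by blast
  ultimately show "H \<in> facets (join \<Delta>1 \<Delta>2)"
    unfolding facets_iff by blast
qed

lemma gen_facet_join_Int_earlier:
  assumes "F \<in> facets \<Delta>1" "G \<in> facets \<Delta>2" "B1 \<subseteq> facets \<Delta>1" "B2 \<subseteq> facets \<Delta>2"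
  shows "gen {F \<union> G} \<inter> gen (join (facets \<Delta>1) B2 \<union> join B1 {G})
    = join (gen {F}) (gen {G} \<inter> gen B2) \<union> join (gen {F} \<inter> gen B1) (gen {G})"
proof -
  have "gen {F \<union> G} = join (gen {F}) (gen {G})"
    using gen_join[of "{F}" "{G}"] by (simp add: join_singleton_left)
  moreover have "gen (join (facets \<Delta>1) B2 \<union> join B1 {G})
      = join (gen (facets \<Delta>1)) (gen B2) \<union> join (gen B1) (gen {G})"
    by (simp add: gen_Un gen_join)
  moreover have "gen {F} \<union> gen (facets \<Delta>1) \<subseteq> Pow V1" "gen {F} \<union> gen B1 \<subseteq> Pow V1"
    and "gen {G} \<union> gen B2 \<subseteq> Pow V2" "gen {G} \<union> gen {G} \<subseteq> Pow V2"
    by (intro Un_least gen_Pow; use assms facets1 facets2 in auto)+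
  moreover have "gen {F} \<inter> gen (facets \<Delta>1) = gen {F}"
    using assms(1) by auto blast
  ultimately show ?thesis
    by (simp add: Int_Un_distrib join_Int_join[OF _ _ disjoint])
qed

lemma gen_facet_Int_earlier_restrict:
  assumes F: "F \<in> facets \<Delta>1" and G: "G \<in> facets \<Delta>2"
  shows "gen {F} \<inter> gen {F' \<in> facets \<Delta>1. P (F' \<union> G)}
    = {x. x \<subseteq> F \<and> x \<union> G \<in> gen {F \<union> G} \<inter> gen {H \<in> facets (join \<Delta>1 \<Delta>2). P H}}"
proof (intro set_eqI iffI)
  fix x assume "x \<in> gen {F} \<inter> gen {F' \<in> facets \<Delta>1. P (F' \<union> G)}"
  then obtain F' where "x \<subseteq> F" "F' \<in> facets \<Delta>1" "P (F' \<union> G)" "x \<subseteq> F'"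
    by auto
  moreover have "F' \<union> G \<in> facets (join \<Delta>1 \<Delta>2)"
    using calculation G by (auto simp: facets_join)
  ultimately show "x \<in> {x. x \<subseteq> F \<and> x \<union> G \<in> gen {F \<union> G} \<inter> gen {H \<in> facets (join \<Delta>1 \<Delta>2). P H}}"
    by auto
next
  fix x assume "x \<in> {x. x \<subseteq> F \<and> x \<union> G \<in> gen {F \<union> G} \<inter> gen {H \<in> facets (join \<Delta>1 \<Delta>2). P H}}"
  then obtain H where "x \<subseteq> F" "H \<in> facets (join \<Delta>1 \<Delta>2)" "P H" "x \<union> G \<subseteq> H"
    by auto
  then obtain F' G' where F': "F' \<in> facets \<Delta>1" and G': "G' \<in> facets \<Delta>2" and "H = F' \<union> G'"
    by (auto simp: facets_join)
  have "F \<subseteq> V1" "G \<subseteq> V2" "F' \<subseteq> V1" "G' \<subseteq> V2"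
    using F G F' G' facets1 facets2 by auto
  then have "G \<subseteq> G'" "x \<subseteq> F'"
    using \<open>x \<union> G \<subseteq> H\<close> \<open>H = F' \<union> G'\<close> \<open>x \<subseteq> F\<close> disjoint by blast+
  moreover have "G' = G"
    using facet_maximal[OF G] G' \<open>G \<subseteq> G'\<close> by (auto simp: facets_iff)
  ultimately show "x \<in> gen {F} \<inter> gen {F' \<in> facets \<Delta>1. P (F' \<union> G)}"
    using \<open>x \<subseteq> F\<close> F' \<open>P H\<close> \<open>H = F' \<union> G'\<close> by auto
qed

end

locale join_ranks = disjoint_complexes +
  fixes f1 f2 :: "'a set \<Rightarrow> nat" and N :: nat
  assumes inj_f1: "inj_on f1 (facets \<Delta>1)" and inj_f2: "inj_on f2 (facets \<Delta>2)"
    and f1_less: "\<And>F. F \<in> facets \<Delta>1 \<Longrightarrow> f1 F < N"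
begin

definition join_rank :: "'a set \<Rightarrow> nat" where
  "join_rank H = f2 (H \<inter> V2) * N + f1 (H \<inter> V1)"

lemma join_rank_Un: "F \<in> facets \<Delta>1 \<Longrightarrow> G \<in> facets \<Delta>2 \<Longrightarrow> join_rank (F \<union> G) = f2 G * N + f1 F"
  using Un_Int_V1 Un_Int_V2 by (simp add: join_rank_def facets_iff)

lemma join_rank_less_iff:
  assumes "F \<in> facets \<Delta>1" "G \<in> facets \<Delta>2" "F' \<in> facets \<Delta>1" "G' \<in> facets \<Delta>2"
  shows "join_rank (F' \<union> G') < join_rank (F \<union> G) \<longleftrightarrow> f2 G' < f2 G \<or> (G' = G \<and> f1 F' < f1 F)"
proof -
  have "f2 G' = f2 G \<longleftrightarrow> G' = G"
    using inj_onD[OF inj_f2] assms(2,4) by metis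
  then show ?thesis
    using mult_add_less_mult_add_iff[OF f1_less[OF assms(1)] f1_less[OF assms(3)]]
    by (simp add: join_rank_Un assms)
qed

lemma inj_on_join_rank: "inj_on join_rank (facets (join \<Delta>1 \<Delta>2))"
proof (rule inj_onI)
  fix H H' assume "H \<in> facets (join \<Delta>1 \<Delta>2)" "H' \<in> facets (join \<Delta>1 \<Delta>2)"
    and eq: "join_rank H = join_rank H'"
  then obtain F G F' G' where F: "F \<in> facets \<Delta>1" and G: "G \<in> facets \<Delta>2" and "H = F \<union> G"
    and F': "F' \<in> facets \<Delta>1" and G': "G' \<in> facets \<Delta>2" and "H' = F' \<union> G'"
    by (auto simp: facets_join elim!: join_memE)
  with eq have "\<not> join_rank (F' \<union> G') < join_rank (F \<union> G)" "\<not> join_rank (F \<union> G) < join_rank (F' \<union> G')"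
    by simp_all
  then have "\<not> (f2 G' < f2 G \<or> (G' = G \<and> f1 F' < f1 F))" "\<not> (f2 G < f2 G' \<or> (G = G' \<and> f1 F < f1 F'))"
    unfolding join_rank_less_iff[OF F G F' G'] join_rank_less_iff[OF F' G' F G] .
  moreover from this have "f2 G' = f2 G"
    by linarith
  ultimately have "G' = G" "f1 F' = f1 F"
    using inj_onD[OF inj_f2 _ G' G] by auto
  with F F' have "F' = F"
    using inj_onD[OF inj_f1] by metis
  with \<open>G' = G\<close> \<open>H = F \<union> G\<close> \<open>H' = F' \<union> G'\<close> show "H = H'"
    by simp
qed

lemma join_rank_earlier:
  assumes F: "F \<in> facets \<Delta>1" and G: "G \<in> facets \<Delta>2"
  shows "{H \<in> facets (join \<Delta>1 \<Delta>2). join_rank H < join_rank (F \<union> G)}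
    = join (facets \<Delta>1) {G' \<in> facets \<Delta>2. f2 G' < f2 G} \<union> join {F' \<in> facets \<Delta>1. f1 F' < f1 F} {G}"
proof (intro set_eqI iffI)
  fix H assume "H \<in> {H \<in> facets (join \<Delta>1 \<Delta>2). join_rank H < join_rank (F \<union> G)}"
  then obtain F' G' where F': "F' \<in> facets \<Delta>1" and G': "G' \<in> facets \<Delta>2" and "H = F' \<union> G'"
    and "f2 G' < f2 G \<or> (G' = G \<and> f1 F' < f1 F)"
    using join_rank_less_iff[OF F G] by (auto simp: facets_join elim!: join_memE)
  then show "H \<in> join (facets \<Delta>1) {G' \<in> facets \<Delta>2. f2 G' < f2 G} \<union> join {F' \<in> facets \<Delta>1. f1 F' < f1 F} {G}"
    by blast
next
  fix H assume "H \<in> join (facets \<Delta>1) {G' \<in> facets \<Delta>2. f2 G' < f2 G} \<union> join {F' \<in> facets \<Delta>1. f1 F' < f1 F} {G}"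
  then show "H \<in> {H \<in> facets (join \<Delta>1 \<Delta>2). join_rank H < join_rank (F \<union> G)}"
  proof (elim UnE join_memE)
    fix F' G' assume "F' \<in> facets \<Delta>1" "G' \<in> {G' \<in> facets \<Delta>2. f2 G' < f2 G}" "H = F' \<union> G'"
    then show ?thesis
      using join_rank_less_iff[OF F G] by (auto simp: facets_join)
  next
    fix F' G' assume "F' \<in> {F' \<in> facets \<Delta>1. f1 F' < f1 F}" "G' \<in> {G}" "H = F' \<union> G'"
    then show ?thesis
      using join_rank_less_iff[OF F G] G by (auto simp: facets_join)
  qed
qed

end

context disjoint_complexes
begin

lemma shelling_rank_join:
  assumes r1: "shelling_rank k \<Delta>1 f1" and r2: "shelling_rank k \<Delta>2 f2"
  shows "\<exists>f. shelling_rank k (join \<Delta>1 \<Delta>2) f"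
proof -
  have "finite (facets \<Delta>1)"
    using complex1 finite_subset[OF facets_subset] unfolding simplicial_complex_def by blast
  then interpret join_ranks \<Delta>1 \<Delta>2 V1 V2 f1 f2 "Suc (Max (f1 ` facets \<Delta>1))"
    using r1 r2 by unfold_locales (auto simp: shelling_rank_def less_Suc_eq_le)
  have "\<exists>S. shelling_facets k H S \<and>
      gen {H} \<inter> gen {H' \<in> facets (join \<Delta>1 \<Delta>2). join_rank H' < join_rank H} = gen S"
    if H: "H \<in> facets (join \<Delta>1 \<Delta>2)" for H
  proof -
    obtain F G where F: "F \<in> facets \<Delta>1" and G: "G \<in> facets \<Delta>2" and "H = F \<union> G"
      using H by (auto simp: facets_join elim!: join_memE)
    obtain S1 where S1: "shelling_facets k F S1" "gen {F} \<inter> gen {F' \<in> facets \<Delta>1. f1 F' < f1 F} = gen S1"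
      using r1 F unfolding shelling_rank_def by blast
    obtain S2 where S2: "shelling_facets k G S2" "gen {G} \<inter> gen {G' \<in> facets \<Delta>2. f2 G' < f2 G} = gen S2"
      using r2 G unfolding shelling_rank_def by blast
    have "gen {H} \<inter> gen {H' \<in> facets (join \<Delta>1 \<Delta>2). join_rank H' < join_rank H}
        = join (gen {F}) (gen S2) \<union> join (gen S1) (gen {G})"
      unfolding \<open>H = F \<union> G\<close> join_rank_earlier[OF F G] S1(2)[symmetric] S2(2)[symmetric]
      by (rule gen_facet_join_Int_earlier[OF F G]) auto
    also have "\<dots> = gen (join {F} S2 \<union> join S1 {G})"
      by (simp add: gen_Un gen_join)
    finally show ?thesis
      using shelling_facets_join[OF finite_facet1[OF F] finite_facet2[OF G] facets_disjoint[OF F G] S1(1) S2(1)]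
        \<open>H = F \<union> G\<close> by blast
  qed
  with inj_on_join_rank show ?thesis
    unfolding shelling_rank_def by blast
qed

lemma shelling_rank_restrict:
  assumes r: "shelling_rank k (join \<Delta>1 \<Delta>2) f" and G: "G \<in> facets \<Delta>2"
  shows "shelling_rank k \<Delta>1 (\<lambda>F. f (F \<union> G))"
proof -
  have facet_join: "F \<union> G \<in> facets (join \<Delta>1 \<Delta>2)" if "F \<in> facets \<Delta>1" for F
    using that G by (auto simp: facets_join)
  have "inj_on (\<lambda>F. f (F \<union> G)) (facets \<Delta>1)"
  proof (rule inj_onI)
    fix F F' assume F: "F \<in> facets \<Delta>1" and F': "F' \<in> facets \<Delta>1" and "f (F \<union> G) = f (F' \<union> G)"
    then have "F \<union> G = F' \<union> G"
      using r facet_join unfolding shelling_rank_def by (meson inj_onD)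
    then show "F = F'"
      using facets_disjoint[OF F G] facets_disjoint[OF F' G] by blast
  qed
  moreover have "\<exists>S. shelling_facets k F S \<and> gen {F} \<inter> gen {F' \<in> facets \<Delta>1. f (F' \<union> G) < f (F \<union> G)} = gen S"
    if F: "F \<in> facets \<Delta>1" for F
  proof -
    obtain S where S: "shelling_facets k (F \<union> G) S"
      "gen {F \<union> G} \<inter> gen {H \<in> facets (join \<Delta>1 \<Delta>2). f H < f (F \<union> G)} = gen S"
      using r facet_join[OF F] unfolding shelling_rank_def by blast
    have "gen {F} \<inter> gen {F' \<in> facets \<Delta>1. f (F' \<union> G) < f (F \<union> G)} = {x. x \<subseteq> F \<and> x \<union> G \<in> gen S}"
      using gen_facet_Int_earlier_restrict[OF F G, of "\<lambda>H. f H < f (F \<union> G)"] S(2) by simp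
    also have "\<dots> = gen ((\<lambda>s. s - G) ` {s \<in> S. G \<subseteq> s})"
      using S(1) facets_disjoint[OF F G] by (intro gen_link) (auto simp: shelling_facets_def)
    finally show ?thesis
      using shelling_facets_link[OF finite_facet1[OF F] finite_facet2[OF G] facets_disjoint[OF F G] S(1)]
      by blast
  qed
  ultimately show ?thesis
    unfolding shelling_rank_def by blast
qed

lemma k_shellable_join:
  assumes "k_shellable k \<Delta>1" "k_shellable k \<Delta>2"
  shows "k_shellable k (join \<Delta>1 \<Delta>2)"
proof -
  obtain f1 f2 where "shelling_rank k \<Delta>1 f1" "shelling_rank k \<Delta>2 f2"
    using assms k_shellable_iff_rank complex1 complex2 by blast
  then obtain f where "shelling_rank k (join \<Delta>1 \<Delta>2) f"
    using shelling_rank_join by blast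
  moreover have "1 \<le> k" "int k \<le> sc_dim (join \<Delta>1 \<Delta>2) + 1"
    using assms(1) sc_dim_le_join[OF complex1 complex2] by (simp_all add: k_shellable_def)
  ultimately show ?thesis
    using k_shellable_iff_rank[OF simplicial_complex_join[OF complex1 complex2]] by blast
qed

lemma k_shellable_of_join:
  assumes "k_shellable k (join \<Delta>1 \<Delta>2)" "int k \<le> sc_dim \<Delta>1 + 1"
  shows "k_shellable k \<Delta>1"
proof -
  obtain f where "shelling_rank k (join \<Delta>1 \<Delta>2) f"
    using assms(1) k_shellable_iff_rank[OF simplicial_complex_join[OF complex1 complex2]] by blast
  moreover obtain G where "G \<in> facets \<Delta>2"
    using ex_facet_superset empty_face complex2 unfolding simplicial_complex_def by meson
  ultimately have "shelling_rank k \<Delta>1 (\<lambda>F. f (F \<union> G))"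
    by (rule shelling_rank_restrict)
  moreover have "1 \<le> k"
    using assms(1) by (simp add: k_shellable_def)
  ultimately show ?thesis
    using assms(2) k_shellable_iff_rank[OF complex1] by blast
qed

end

theorem theorem2p7:
  fixes \<Delta>1 \<Delta>2 :: "'a set set" and V1 V2 :: "'a set" and k :: nat
  assumes "simplicial_complex \<Delta>1" and "simplicial_complex \<Delta>2"
    and "\<Delta>1 \<subseteq> Pow V1" and "\<Delta>2 \<subseteq> Pow V2" and "V1 \<inter> V2 = {}"
    and "1 \<le> k" and "int k \<le> sc_dim \<Delta>1 + 1" and "int k \<le> sc_dim \<Delta>2 + 1"
  shows "(k_shellable k \<Delta>1 \<and> k_shellable k \<Delta>2) \<longleftrightarrow> k_shellable k (join \<Delta>1 \<Delta>2)"
proof -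
  interpret d12: disjoint_complexes \<Delta>1 \<Delta>2 V1 V2
    using assms(1-5) by unfold_locales
  interpret d21: disjoint_complexes \<Delta>2 \<Delta>1 V2 V1
    using assms(1-5) by unfold_locales auto
  show ?thesis
    using d12.k_shellable_join d12.k_shellable_of_join[OF _ assms(7)]
      d21.k_shellable_of_join[OF _ assms(8)] join_commute[of \<Delta>1 \<Delta>2] by metis
qed

end
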